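(* Let $K$ be a field, $S=K[x_1,\ldots,x_n]$, let $m<n$, let $S'=K[x_1,\ldots,x_m]$ and let $J\subset S'$ be a monomial ideal. Set $I=JS$. Then for any $k$ with $m<k\le n$, \[ \operatorname{sdepth}(S/(I,x_k))=\operatorname{sdepth}(S/I)-1. \]
   Context: For a monomial ideal $I\subset S$, let $I^c$ be the $K$-linear subspace of $S$ spanned by all monomials not in $I$, so $S/I\cong I^c$ as $K$-vector spaces. For a monomial $v$ and a subset $Z\subset\{x_1,\ldots,x_n\}$, the $K$-subspace $vK[Z]$ spanned by all monomials $vw$ with $w$ a monomial in $K[Z]$ is a Stanley space of dimension $|Z|$. A Stanley decomposition $\mathcal D$ of $S/I$ is a decomposition of $I^c$ as a finite direct sum of Stanley spaces; $\operatorname{sdepth}(\mathcal D)$ is the minimal dimension of a Stanley space in $\mathcal D$, and $\operatorname{sdepth}(S/I)$ is the maximum of $\operatorname{sdepth}(\mathcal D)$ over all Stanley decompositions $\mathcal D$ of $S/I$. *)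

theory Defs
  imports "HOL-Library.Poly_Mapping" "HOL-Library.Extended_Nat"
begin

text \<open>Monomials in variables x_1, x_2, ... are finitely supported exponent vectors
  (index i = exponent of x_i); multiplication of monomials is addition of exponent vectors.
  Polynomials over a field K are finitely supported maps from monomials to K
  (coefficient of each monomial).\<close>

type_synonym mon = "nat \<Rightarrow>\<^sub>0 nat"

definition mons :: "nat \<Rightarrow> mon set" where
  "mons n = {u. Poly_Mapping.keys u \<subseteq> {1..n}}"

definition var :: "nat \<Rightarrow> mon" where
  "var i = Poly_Mapping.single i 1"

text \<open>A monomial ideal of K[x_1,...,x_n] is determined by (and is the K-span of) the set of
  monomials it contains; this set is closed under multiplication by monomials.\<close>
definition monomial_ideal :: "nat \<Rightarrow> mon set \<Rightarrow> bool" where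
  "monomial_ideal n M \<longleftrightarrow> M \<subseteq> mons n \<and> (\<forall>u\<in>M. \<forall>w\<in>mons n. u + w \<in> M)"

definition gen_ideal :: "nat \<Rightarrow> mon set \<Rightarrow> mon set" where
  "gen_ideal n G = {u \<in> mons n. \<exists>g\<in>G. \<exists>w\<in>mons n. u = g + w}"

definition span_mons :: "'k itself \<Rightarrow> mon set \<Rightarrow> (mon \<Rightarrow>\<^sub>0 'k::field) set" where
  "span_mons _ A = {p. Poly_Mapping.keys p \<subseteq> A}"

text \<open>I^c: the K-span of the monomials of S=K[x_1..x_n] not in the monomial ideal I (given by
  its monomial set M).\<close>
definition compl_space :: "'k itself \<Rightarrow> nat \<Rightarrow> mon set \<Rightarrow> (mon \<Rightarrow>\<^sub>0 'k::field) set" where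
  "compl_space K n M = span_mons K (mons n - M)"

definition stanley_space :: "'k itself \<Rightarrow> mon \<Rightarrow> nat set \<Rightarrow> (mon \<Rightarrow>\<^sub>0 'k::field) set" where
  "stanley_space K v Z = span_mons K {v + w | w. Poly_Mapping.keys w \<subseteq> Z}"

definition is_direct_sum :: "('a::ab_group_add) set \<Rightarrow> 'd set \<Rightarrow> ('d \<Rightarrow> 'a set) \<Rightarrow> bool" where
  "is_direct_sum V D sp \<longleftrightarrow> finite D \<and> (\<forall>d\<in>D. sp d \<subseteq> V) \<and>
     (\<forall>p\<in>V. \<exists>!f. (\<forall>d\<in>D. f d \<in> sp d) \<and> (\<forall>d. d \<notin> D \<longrightarrow> f d = 0) \<and> p = (\<Sum>d\<in>D. f d))"

text \<open>A Stanley decomposition of S/I (S = K[x_1..x_n], I given by monomial set M): a finite family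
  of Stanley spaces v K[Z] (v a monomial of S, Z \<subseteq> {x_1..x_n}) whose direct sum is I^c.\<close>
definition stanley_dec :: "'k::field itself \<Rightarrow> nat \<Rightarrow> mon set \<Rightarrow> (mon \<times> nat set) set \<Rightarrow> bool" where
  "stanley_dec K n M D \<longleftrightarrow> (\<forall>(v, Z)\<in>D. v \<in> mons n \<and> Z \<subseteq> {1..n}) \<and>
     is_direct_sum (compl_space K n M) D (\<lambda>(v, Z). stanley_space K v Z)"

text \<open>sdepth of a decomposition: minimal dimension |Z| (infinite for the empty decomposition).\<close>
definition sdepth_dec :: "(mon \<times> nat set) set \<Rightarrow> enat" where
  "sdepth_dec D = (INF (v, Z)\<in>D. enat (card Z))"

definition sdepth :: "'k::field itself \<Rightarrow> nat \<Rightarrow> mon set \<Rightarrow> enat" where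
  "sdepth K n M = (SUP D\<in>{D. stanley_dec K n M D}. sdepth_dec D)"

end

theory Submission
  imports Defs "HOL-Library.Disjoint_Sets"
begin

text \<open>A Stanley decomposition of \<open>S/I\<close> is the same thing as a partition of the standard
  monomials of \<open>I\<close> into finitely many blocks \<open>v\<cdot>Mon(Z)\<close>. Because \<open>I\<close> is generated in
  \<open>x\<^sub>1, \<dots>, x\<^sub>m\<close>, a monomial is standard for \<open>I\<close> iff its \<open>x\<^sub>k\<close>-free part is, and the
  standard monomials of \<open>(I, x\<^sub>k)\<close> are the standard monomials of \<open>I\<close> not divisible by \<open>x\<^sub>k\<close>.
  Intersecting the blocks of a decomposition of \<open>S/I\<close> with the hyperplane \<open>x\<^sub>k = 0\<close> thus
  decomposes \<open>S/(I, x\<^sub>k)\<close> and loses at most one dimension per block, while adjoining \<open>x\<^sub>k\<close>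
  to every block of a decomposition of \<open>S/(I, x\<^sub>k)\<close> decomposes \<open>S/I\<close> and gains exactly one.\<close>

abbreviation (input) lookup where "lookup \<equiv> Poly_Mapping.lookup"
abbreviation (input) keys where "keys \<equiv> Poly_Mapping.keys"

subsection \<open>Direct sums of spans of monomials\<close>

definition poly_mapping_restrict :: "'a set \<Rightarrow> ('a \<Rightarrow>\<^sub>0 'b::zero) \<Rightarrow> ('a \<Rightarrow>\<^sub>0 'b)" where
  "poly_mapping_restrict A p = Abs_poly_mapping (\<lambda>x. if x \<in> A then lookup p x else 0)"

lemma lookup_poly_mapping_restrict:
  "lookup (poly_mapping_restrict A p) x = (if x \<in> A then lookup p x else 0)"
proof -
  have "finite {x. (if x \<in> A then lookup p x else 0) \<noteq> 0}"
    by (rule finite_subset[of _ "keys p"]) (auto simp: in_keys_iff)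
  then show ?thesis unfolding poly_mapping_restrict_def by simp
qed

lemma poly_mapping_restrict_in_span_mons: "poly_mapping_restrict A p \<in> span_mons K A"
  by (auto simp: span_mons_def in_keys_iff lookup_poly_mapping_restrict split: if_splits)

lemma single_one_in_span_mons_iff:
  "Poly_Mapping.single x (1::'k::field) \<in> span_mons K A \<longleftrightarrow> x \<in> A"
  by (simp add: span_mons_def)

lemma lookup_eq_zero_if_span_mons: "p \<in> span_mons K A \<Longrightarrow> x \<notin> A \<Longrightarrow> lookup p x = 0"
  by (auto simp: span_mons_def in_keys_iff)

lemma lookup_sum_disjoint_span_mons:
  fixes g :: "'d \<Rightarrow> (mon \<Rightarrow>\<^sub>0 'k::field)"
  assumes "finite D" "disjoint_family_on A D" "d \<in> D" "x \<in> A d"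
    and "\<And>e. e \<in> D \<Longrightarrow> g e \<in> span_mons K (A e)"
  shows "lookup (\<Sum>e\<in>D. g e) x = lookup (g d) x"
proof -
  have "x \<notin> A e" if "e \<in> D - {d}" for e
    using that assms(2-4) by (auto simp: disjoint_family_on_def)
  then have "(\<Sum>e\<in>D - {d}. lookup (g e) x) = 0"
    using assms(5) lookup_eq_zero_if_span_mons by (meson DiffD1 sum.neutral)
  then show ?thesis
    using assms(1,3) by (simp add: lookup_add lookup_sum sum.remove[of D d])
qed

lemma direct_sum_span_mons_imp_partition:
  fixes K :: "'k::field itself"
  assumes sum: "is_direct_sum (span_mons K U) D (\<lambda>d. span_mons K (A d))"
  shows "disjoint_family_on A D" "(\<Union>d\<in>D. A d) = U"
proof -
  define is_dec where "is_dec p f \<longleftrightarrow> (\<forall>d\<in>D. f d \<in> span_mons K (A d)) \<and>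
    (\<forall>d. d \<notin> D \<longrightarrow> f d = 0) \<and> p = (\<Sum>d\<in>D. f d)" for p f
  have fin: "finite D" and sub: "\<And>d. d \<in> D \<Longrightarrow> span_mons K (A d) \<subseteq> span_mons K U"
    and unique: "\<And>p. p \<in> span_mons K U \<Longrightarrow> \<exists>!f. is_dec p f"
    using sum by (simp_all add: is_direct_sum_def is_dec_def)
  let ?e = "\<lambda>x. Poly_Mapping.single x (1::'k)"
  show "disjoint_family_on A D"
  proof (unfold disjoint_family_on_def, intro ballI impI, rule ccontr)
    fix d d' assume dd': "d \<in> D" "d' \<in> D" "d \<noteq> d'" and "A d \<inter> A d' \<noteq> {}"
    then obtain x where x: "x \<in> A d" "x \<in> A d'" by blast
    have e_in_U: "?e x \<in> span_mons K U" using sub[OF dd'(1)] x(1) single_one_in_span_mons_iff by blast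
    have dec_at: "is_dec (?e x) (\<lambda>e. if e = c then ?e x else 0)" if "c \<in> D" "x \<in> A c" for c
      using that fin by (auto simp: is_dec_def span_mons_def)
    have "\<exists>\<^sub>\<le>\<^sub>1f. is_dec (?e x) f" using unique[OF e_in_U] by (simp add: ex1_iff_ex_Uniq)
    then have "(\<lambda>e. if e = d then ?e x else 0) = (\<lambda>e. if e = d' then ?e x else 0)"
      using dec_at[OF dd'(1) x(1)] dec_at[OF dd'(2) x(2)] by (rule Uniq_D[where P = "is_dec (?e x)"])
    from fun_cong[OF this, of d] have "?e x = 0" using dd'(3) by simp
    then show False by (metis lookup_single_eq lookup_zero one_neq_zero)
  qed
  show "(\<Union>d\<in>D. A d) = U"
  proof
    show "(\<Union>d\<in>D. A d) \<subseteq> U"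
    proof
      fix x assume "x \<in> (\<Union>d\<in>D. A d)"
      then obtain d where "d \<in> D" "?e x \<in> span_mons K (A d)"
        by (auto simp: single_one_in_span_mons_iff)
      then show "x \<in> U" using sub single_one_in_span_mons_iff by blast
    qed
    show "U \<subseteq> (\<Union>d\<in>D. A d)"
    proof
      fix x assume "x \<in> U"
      then have "\<exists>f. is_dec (?e x) f"
        using unique[of "?e x"] ex1_implies_ex by (simp add: single_one_in_span_mons_iff)
      then obtain f where f: "\<forall>d\<in>D. f d \<in> span_mons K (A d)" "?e x = (\<Sum>d\<in>D. f d)"
        unfolding is_dec_def by blast
      then have "(\<Sum>d\<in>D. lookup (f d) x) \<noteq> 0" by (metis lookup_single_eq lookup_sum one_neq_zero)
      then obtain d where "d \<in> D" "lookup (f d) x \<noteq> 0" by (meson sum.neutral)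
      then show "x \<in> (\<Union>d\<in>D. A d)" using f(1) lookup_eq_zero_if_span_mons by blast
    qed
  qed
qed

lemma partition_imp_direct_sum_span_mons:
  fixes K :: "'k::field itself"
  assumes fin: "finite D" and disj: "disjoint_family_on A D" and cover: "(\<Union>d\<in>D. A d) = U"
  shows "is_direct_sum (span_mons K U) D (\<lambda>d. span_mons K (A d))"
proof -
  have decompose: "p = (\<Sum>d\<in>D. poly_mapping_restrict (A d) p)" if p: "p \<in> span_mons K U" for p
  proof (rule poly_mapping_eqI)
    fix x
    show "lookup p x = lookup (\<Sum>d\<in>D. poly_mapping_restrict (A d) p) x"
    proof (cases "x \<in> U")
      case True
      then obtain d where "d \<in> D" "x \<in> A d" using cover by blast
      then show ?thesis
        using lookup_sum_disjoint_span_mons[OF fin disj, of d x "\<lambda>d. poly_mapping_restrict (A d) p"]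
        by (simp add: lookup_poly_mapping_restrict poly_mapping_restrict_in_span_mons)
    next
      case False
      show ?thesis
      proof -
        have "x \<notin> A d" if "d \<in> D" for d using False cover that by blast
        moreover have "lookup p x = 0" using p False by (rule lookup_eq_zero_if_span_mons)
        ultimately show ?thesis by (simp add: lookup_sum lookup_poly_mapping_restrict)
      qed
    qed
  qed
  have components: "g d = poly_mapping_restrict (A d) p"
    if g: "\<And>e. e \<in> D \<Longrightarrow> g e \<in> span_mons K (A e)" and p: "p = (\<Sum>e\<in>D. g e)" and d: "d \<in> D"
    for g p and d
  proof (rule poly_mapping_eqI)
    fix x
    show "lookup (g d) x = lookup (poly_mapping_restrict (A d) p) x"
    proof (cases "x \<in> A d")
      case True
      then show ?thesis
        using lookup_sum_disjoint_span_mons[OF fin disj d True g] p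
        by (simp add: lookup_poly_mapping_restrict)
    next
      case False
      then show ?thesis
        using lookup_eq_zero_if_span_mons[OF g[OF d]] by (simp add: lookup_poly_mapping_restrict)
    qed
  qed
  show ?thesis
    unfolding is_direct_sum_def
  proof (intro conjI ballI)
    show "finite D" by (fact fin)
    show "span_mons K (A d) \<subseteq> span_mons K U" if "d \<in> D" for d
      using that cover by (auto simp: span_mons_def)
    fix p assume p: "p \<in> span_mons K U"
    let ?f = "\<lambda>d. if d \<in> D then poly_mapping_restrict (A d) p else 0"
    show "\<exists>!f. (\<forall>d\<in>D. f d \<in> span_mons K (A d)) \<and> (\<forall>d. d \<notin> D \<longrightarrow> f d = 0) \<and> p = (\<Sum>d\<in>D. f d)"
    proof (rule ex1I[of _ ?f])
      have "p = (\<Sum>d\<in>D. poly_mapping_restrict (A d) p)" using p by (rule decompose)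
      also have "\<dots> = (\<Sum>d\<in>D. ?f d)" by (rule sum.cong) simp_all
      finally show "(\<forall>d\<in>D. ?f d \<in> span_mons K (A d)) \<and> (\<forall>d. d \<notin> D \<longrightarrow> ?f d = 0) \<and> p = (\<Sum>d\<in>D. ?f d)"
        by (simp add: poly_mapping_restrict_in_span_mons)
      fix g assume "(\<forall>d\<in>D. g d \<in> span_mons K (A d)) \<and> (\<forall>d. d \<notin> D \<longrightarrow> g d = 0) \<and> p = (\<Sum>d\<in>D. g d)"
      then show "g = ?f" using components[of g p] by (intro ext) (simp add: if_split)
    qed
  qed
qed

lemma is_direct_sum_span_mons_iff:
  fixes K :: "'k::field itself"
  shows "is_direct_sum (span_mons K U) D (\<lambda>d. span_mons K (A d)) \<longleftrightarrow>
    finite D \<and> disjoint_family_on A D \<and> (\<Union>d\<in>D. A d) = U"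
proof
  assume sum: "is_direct_sum (span_mons K U) D (\<lambda>d. span_mons K (A d))"
  then have "finite D" by (simp add: is_direct_sum_def)
  with direct_sum_span_mons_imp_partition[OF sum]
  show "finite D \<and> disjoint_family_on A D \<and> (\<Union>d\<in>D. A d) = U" by blast
qed (intro partition_imp_direct_sum_span_mons; simp)

subsection \<open>Stanley decompositions as partitions of monomials\<close>

definition mon_block :: "mon \<Rightarrow> nat set \<Rightarrow> mon set" where
  "mon_block v Z = {v + w | w. keys w \<subseteq> Z}"

lemma mem_mon_block_iff:
  "x \<in> mon_block v Z \<longleftrightarrow>
    (\<forall>i. lookup v i \<le> lookup x i) \<and> (\<forall>i. i \<notin> Z \<longrightarrow> lookup x i = lookup v i)"
proof
  assume "x \<in> mon_block v Z"
  then obtain w where "x = v + w" "keys w \<subseteq> Z" by (auto simp: mon_block_def)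
  then show "(\<forall>i. lookup v i \<le> lookup x i) \<and> (\<forall>i. i \<notin> Z \<longrightarrow> lookup x i = lookup v i)"
    by (auto simp: lookup_add in_keys_iff)
next
  assume le: "(\<forall>i. lookup v i \<le> lookup x i) \<and> (\<forall>i. i \<notin> Z \<longrightarrow> lookup x i = lookup v i)"
  then have "x = v + (x - v)"
    by (intro poly_mapping_eqI) (simp add: lookup_add lookup_minus)
  moreover have "keys (x - v) \<subseteq> Z" using le by (auto simp: in_keys_iff lookup_minus)
  ultimately show "x \<in> mon_block v Z" unfolding mon_block_def by blast
qed

definition stanley_partition :: "nat \<Rightarrow> mon set \<Rightarrow> (mon \<times> nat set) set \<Rightarrow> bool" where
  "stanley_partition n U D \<longleftrightarrow> (\<forall>(v, Z)\<in>D. v \<in> mons n \<and> Z \<subseteq> {1..n}) \<and> finite D \<and>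
     disjoint_family_on (case_prod mon_block) D \<and> (\<Union>d\<in>D. case_prod mon_block d) = U"

lemma stanley_partitionD:
  assumes "stanley_partition n U D"
  shows "\<forall>(v, Z)\<in>D. v \<in> mons n \<and> Z \<subseteq> {1..n}" "finite D" "disjoint_family_on (case_prod mon_block) D"
    and "\<And>v Z. (v, Z) \<in> D \<Longrightarrow> mon_block v Z \<subseteq> U"
    and "(\<Union>d\<in>D. case_prod mon_block d) = U"
  using assms unfolding stanley_partition_def by auto

lemma stanley_dec_iff_stanley_partition:
  "stanley_dec K n M D \<longleftrightarrow> stanley_partition n (mons n - M) D"
proof -
  have "(\<lambda>(v, Z). stanley_space K v Z) = (\<lambda>d. span_mons K (case_prod mon_block d))"
    by (auto simp: stanley_space_def mon_block_def)
  then show ?thesis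
    by (simp add: stanley_dec_def stanley_partition_def compl_space_def is_direct_sum_span_mons_iff)
qed

lemma sdepth_eq_SUP_stanley_partition:
  "sdepth K n M = (SUP D\<in>{D. stanley_partition n (mons n - M) D}. sdepth_dec D)"
  unfolding sdepth_def stanley_dec_iff_stanley_partition ..

lemma stanley_partition_pullback:
  assumes part: "stanley_partition n U D"
    and entries: "\<forall>(v, Z)\<in>h ` D. v \<in> mons n \<and> Z \<subseteq> {1..n}"
    and block: "\<And>d. d \<in> D \<Longrightarrow> case_prod mon_block (h d) = S \<inter> \<phi> -` case_prod mon_block d"
  shows "stanley_partition n (S \<inter> \<phi> -` U) (h ` D)"
  unfolding stanley_partition_def
proof (intro conjI)
  show "finite (h ` D)" using stanley_partitionD(2)[OF part] by simp
  show "disjoint_family_on (case_prod mon_block) (h ` D)"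
  proof (unfold disjoint_family_on_def, intro ballI impI)
    fix a b assume "a \<in> h ` D" "b \<in> h ` D" "a \<noteq> b"
    then obtain d d' where d: "d \<in> D" "a = h d" and d': "d' \<in> D" "b = h d'" by blast
    with \<open>a \<noteq> b\<close> have "d \<noteq> d'" by blast
    with disjoint_family_onD[OF stanley_partitionD(3)[OF part] d(1) d'(1)]
    show "case_prod mon_block a \<inter> case_prod mon_block b = {}"
      unfolding d(2) d'(2) block[OF d(1)] block[OF d'(1)] by blast
  qed
  have "(\<Union>e\<in>h ` D. case_prod mon_block e) = (\<Union>d\<in>D. S \<inter> \<phi> -` case_prod mon_block d)"
    using block by simp
  also have "\<dots> = S \<inter> \<phi> -` (\<Union>d\<in>D. case_prod mon_block d)" by blast
  also have "\<dots> = S \<inter> \<phi> -` U" using stanley_partitionD(5)[OF part] by simp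
  finally show "(\<Union>e\<in>h ` D. case_prod mon_block e) = S \<inter> \<phi> -` U" .
qed (fact entries)

subsection \<open>Restriction to the hyperplane and extension by a variable\<close>

lemma mon_block_Diff_var:
  assumes "lookup v k = 0"
  shows "mon_block v (Z - {k}) = {u. lookup u k = 0} \<inter> mon_block v Z"
proof (rule set_eqI)
  fix x
  have "(\<forall>i. i \<notin> Z - {k} \<longrightarrow> lookup x i = lookup v i) \<longleftrightarrow>
      lookup x k = 0 \<and> (\<forall>i. i \<notin> Z \<longrightarrow> lookup x i = lookup v i)"
    using assms by auto
  then show "x \<in> mon_block v (Z - {k}) \<longleftrightarrow> x \<in> {u. lookup u k = 0} \<inter> mon_block v Z"
    by (simp only: Int_iff mem_Collect_eq mem_mon_block_iff) blast
qed

lemma mon_block_disjoint_hyperplane: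
  assumes "lookup v k \<noteq> 0"
  shows "{u. lookup u k = 0} \<inter> mon_block v Z = {}"
proof -
  have "lookup x k \<noteq> 0" if "x \<in> mon_block v Z" for x
    using that assms unfolding mem_mon_block_iff by (metis le_zero_eq)
  then show ?thesis by blast
qed

lemma mon_block_insert_var:
  assumes "lookup v k = 0"
  shows "mon_block v (insert k Z) = Poly_Mapping.update k 0 -` mon_block v Z"
  using assms by (auto simp: mem_mon_block_iff lookup_update split: if_splits; metis le0)

lemma mon_block_subset_hyperplane:
  assumes "mon_block v Z \<subseteq> {u. lookup u k = 0}"
  shows "lookup v k = 0" "k \<notin> Z"
proof -
  have "v \<in> mon_block v Z" by (simp add: mem_mon_block_iff)
  then show "lookup v k = 0" using assms by blast
  show "k \<notin> Z"
  proof
    assume "k \<in> Z"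
    then have "v + Poly_Mapping.single k 1 \<in> mon_block v Z"
      by (auto simp: mem_mon_block_iff lookup_add lookup_single when_def)
    then show False using assms by (auto simp: lookup_add)
  qed
qed

definition restrict_dec :: "nat \<Rightarrow> (mon \<times> nat set) set \<Rightarrow> (mon \<times> nat set) set" where
  "restrict_dec k D = (\<lambda>(v, Z). (v, Z - {k})) ` {(v, Z) \<in> D. lookup v k = 0}"

definition extend_dec :: "nat \<Rightarrow> (mon \<times> nat set) set \<Rightarrow> (mon \<times> nat set) set" where
  "extend_dec k D = (\<lambda>(v, Z). (v, insert k Z)) ` D"

lemma stanley_partition_restrict_dec:
  assumes part: "stanley_partition n U D"
  shows "stanley_partition n {u \<in> U. lookup u k = 0} (restrict_dec k D)"
proof -
  define D0 where "D0 = {(v, Z) \<in> D. lookup v k = 0}"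
  let ?H = "{u. lookup u k = 0}"
  have sub: "D0 \<subseteq> D" by (auto simp: D0_def)
  have part0: "stanley_partition n (\<Union>d\<in>D0. case_prod mon_block d) D0"
    unfolding stanley_partition_def
  proof (intro conjI)
    show "\<forall>(v, Z)\<in>D0. v \<in> mons n \<and> Z \<subseteq> {1..n}"
      using sub stanley_partitionD(1)[OF part] by blast
    show "finite D0" using finite_subset[OF sub stanley_partitionD(2)[OF part]] .
    show "disjoint_family_on (case_prod mon_block) D0"
      using disjoint_family_on_mono[OF sub stanley_partitionD(3)[OF part]] .
  qed (rule refl)
  have "stanley_partition n (?H \<inter> id -` (\<Union>d\<in>D0. case_prod mon_block d))
      ((\<lambda>(v, Z). (v, Z - {k})) ` D0)"
    using part0
  proof (rule stanley_partition_pullback)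
    show "\<forall>(v, Z)\<in>(\<lambda>(v, Z). (v, Z - {k})) ` D0. v \<in> mons n \<and> Z \<subseteq> {1..n}"
      using stanley_partitionD(1)[OF part0] by auto
    show "case_prod mon_block (case d of (v, Z) \<Rightarrow> (v, Z - {k})) = ?H \<inter> id -` case_prod mon_block d"
      if "d \<in> D0" for d
      using that mon_block_Diff_var by (auto simp: D0_def)
  qed
  moreover have "?H \<inter> case_prod mon_block d = {}" if "d \<in> D - D0" for d
    using that mon_block_disjoint_hyperplane by (auto simp: D0_def)
  then have "?H \<inter> (\<Union>d\<in>D0. case_prod mon_block d) = ?H \<inter> (\<Union>d\<in>D. case_prod mon_block d)"
    using sub by blast
  ultimately show ?thesis
    using stanley_partitionD(5)[OF part] by (simp add: restrict_dec_def D0_def Int_def conj_commute)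
qed

lemma stanley_partition_extend_dec:
  assumes part: "stanley_partition n U D"
    and hyperplane: "U \<subseteq> {u. lookup u k = 0}" and k: "k \<in> {1..n}"
  shows "stanley_partition n (Poly_Mapping.update k 0 -` U) (extend_dec k D)"
proof -
  have vZ: "lookup v k = 0" "k \<notin> Z" if "(v, Z) \<in> D" for v Z
    using mon_block_subset_hyperplane stanley_partitionD(4)[OF part that] hyperplane by blast+
  have "stanley_partition n (UNIV \<inter> Poly_Mapping.update k 0 -` U) (extend_dec k D)"
    unfolding extend_dec_def using part
  proof (rule stanley_partition_pullback)
    show "\<forall>(v, Z)\<in>(\<lambda>(v, Z). (v, insert k Z)) ` D. v \<in> mons n \<and> Z \<subseteq> {1..n}"
    proof -
      have "v \<in> mons n \<and> insert k Z \<subseteq> {1..n}" if "(v, Z) \<in> D" for v Z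
        using stanley_partitionD(1)[OF part] that k by auto
      then show ?thesis by auto
    qed
    show "case_prod mon_block (case d of (v, Z) \<Rightarrow> (v, insert k Z)) =
        UNIV \<inter> Poly_Mapping.update k 0 -` case_prod mon_block d" if "d \<in> D" for d
      using that vZ mon_block_insert_var by auto
  qed
  then show ?thesis by simp
qed

subsection \<open>Stanley depth\<close>

lemma INF_plus_one_enat:
  fixes f :: "'a \<Rightarrow> enat"
  shows "(INF x\<in>A. f x) + 1 = (INF x\<in>A. f x + 1)"
proof (cases "A = {}")
  case True
  then show ?thesis by (simp add: top_enat_def)
next
  case False
  then have "(INF x\<in>A. f x) \<in> f ` A" by (blast intro: wellorder_InfI)
  then obtain a where a: "a \<in> A" "f a = (INF x\<in>A. f x)" by auto
  show ?thesis
  proof (rule antisym)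
    show "(INF x\<in>A. f x) + 1 \<le> (INF x\<in>A. f x + 1)"
      by (rule INF_greatest) (simp add: INF_lower add_right_mono)
    show "(INF x\<in>A. f x + 1) \<le> (INF x\<in>A. f x) + 1"
      using a by (metis INF_lower)
  qed
qed

lemma enat_SUP_eq_SUP_minus_one:
  fixes f :: "'a \<Rightarrow> enat" and g :: "'b \<Rightarrow> enat"
  assumes down: "\<And>a. a \<in> A \<Longrightarrow> \<exists>b\<in>B. f a \<le> g b + 1"
    and up: "\<And>b. b \<in> B \<Longrightarrow> \<exists>a\<in>A. g b + 1 \<le> f a"
  shows "(SUP b\<in>B. g b) = (SUP a\<in>A. f a) - 1"
proof (rule antisym)
  show "(SUP b\<in>B. g b) \<le> (SUP a\<in>A. f a) - 1"
  proof (rule SUP_least)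
    fix b assume "b \<in> B"
    then obtain a where "a \<in> A" "g b + 1 \<le> f a" using up by blast
    then have "g b + 1 \<le> (SUP a\<in>A. f a)" by (blast intro: SUP_upper2)
    then show "g b \<le> (SUP a\<in>A. f a) - 1"
      by (cases "g b"; cases "SUP a\<in>A. f a") (auto simp: one_enat_def)
  qed
  have "(SUP a\<in>A. f a) \<le> (SUP b\<in>B. g b) + 1"
  proof (rule SUP_least)
    fix a assume "a \<in> A"
    then obtain b where "b \<in> B" "f a \<le> g b + 1" using down by blast
    then show "f a \<le> (SUP b\<in>B. g b) + 1" by (blast intro: order_trans add_right_mono SUP_upper)
  qed
  then show "(SUP a\<in>A. f a) - 1 \<le> (SUP b\<in>B. g b)"
    by (cases "SUP a\<in>A. f a"; cases "SUP b\<in>B. g b") (auto simp: one_enat_def)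
qed

lemma sdepth_dec_eq_INF_card: "sdepth_dec D = (INF d\<in>D. enat (card (snd d)))"
  by (simp add: sdepth_dec_def case_prod_beta)

lemma sdepth_dec_le_plus_one:
  assumes "\<And>e. e \<in> E \<Longrightarrow> \<exists>d\<in>D. card (snd d) \<le> card (snd e) + 1"
  shows "sdepth_dec D \<le> sdepth_dec E + 1"
proof -
  have "sdepth_dec D \<le> enat (card (snd e)) + 1" if e: "e \<in> E" for e
  proof -
    obtain d where d: "d \<in> D" "card (snd d) \<le> card (snd e) + 1" using assms[OF e] by blast
    have "sdepth_dec D \<le> enat (card (snd d))"
      unfolding sdepth_dec_eq_INF_card using d(1) by (rule INF_lower)
    also have "\<dots> \<le> enat (card (snd e)) + 1"
      using d(2) by (simp add: one_enat_def)
    finally show ?thesis .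
  qed
  then have "sdepth_dec D \<le> (INF e\<in>E. enat (card (snd e)) + 1)" by (rule INF_greatest)
  then show ?thesis by (simp only: sdepth_dec_eq_INF_card INF_plus_one_enat)
qed

lemma sdepth_dec_plus_one_le:
  assumes "\<And>e. e \<in> E \<Longrightarrow> \<exists>d\<in>D. card (snd d) + 1 \<le> card (snd e)"
  shows "sdepth_dec D + 1 \<le> sdepth_dec E"
proof -
  have "(INF d\<in>D. enat (card (snd d)) + 1) \<le> enat (card (snd e))" if e: "e \<in> E" for e
  proof -
    obtain d where d: "d \<in> D" "card (snd d) + 1 \<le> card (snd e)" using assms[OF e] by blast
    have "(INF d\<in>D. enat (card (snd d)) + 1) \<le> enat (card (snd d)) + 1"
      using d(1) by (rule INF_lower)
    also have "\<dots> \<le> enat (card (snd e))"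
      using d(2) by (simp add: one_enat_def)
    finally show ?thesis .
  qed
  then have "(INF d\<in>D. enat (card (snd d)) + 1) \<le> (INF e\<in>E. enat (card (snd e)))"
    by (rule INF_greatest)
  then show ?thesis by (simp only: sdepth_dec_eq_INF_card INF_plus_one_enat)
qed

lemma sdepth_dec_restrict_dec: "sdepth_dec D \<le> sdepth_dec (restrict_dec k D) + 1"
proof (rule sdepth_dec_le_plus_one)
  fix e assume "e \<in> restrict_dec k D"
  then obtain v Z where "(v, Z) \<in> D" "e = (v, Z - {k})" by (auto simp: restrict_dec_def)
  moreover have "card Z \<le> card (Z - {k}) + 1"
    by (cases "finite Z") (simp_all add: card_Diff_singleton_if, linarith)
  ultimately show "\<exists>d\<in>D. card (snd d) \<le> card (snd e) + 1" by force
qed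

lemma sdepth_dec_extend_dec:
  assumes part: "stanley_partition n U D" and hyperplane: "U \<subseteq> {u. lookup u k = 0}"
  shows "sdepth_dec D + 1 \<le> sdepth_dec (extend_dec k D)"
proof (rule sdepth_dec_plus_one_le)
  fix e assume "e \<in> extend_dec k D"
  then obtain v Z where vZ: "(v, Z) \<in> D" "e = (v, insert k Z)" by (auto simp: extend_dec_def)
  have "k \<notin> Z"
    using mon_block_subset_hyperplane(2) stanley_partitionD(4)[OF part vZ(1)] hyperplane by blast
  moreover have "finite Z"
    using stanley_partitionD(1)[OF part] vZ(1) finite_subset[of Z "{1..n}"] by auto
  ultimately have "card Z + 1 \<le> card (insert k Z)" by simp
  then show "\<exists>d\<in>D. card (snd d) + 1 \<le> card (snd e)" using vZ by force
qed

subsection \<open>Monomial ideals\<close>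

lemma add_mem_mons: "u \<in> mons n \<Longrightarrow> w \<in> mons n \<Longrightarrow> u + w \<in> mons n"
  using keys_add[of u w] by (auto simp: mons_def)

lemma lookup_eq_zero_if_mons: "u \<in> mons m \<Longrightarrow> m < k \<Longrightarrow> lookup u k = 0"
  by (metis atLeastAtMost_iff in_keys_iff mons_def mem_Collect_eq not_le subsetD)

lemma update_zero_mem_mons_iff:
  assumes "k \<in> {1..n}"
  shows "Poly_Mapping.update k 0 x \<in> mons n \<longleftrightarrow> x \<in> mons n"
  using assms by (auto simp: mons_def in_keys_iff lookup_update subset_iff split: if_splits)

lemma monomial_ideal_gen_ideal: "monomial_ideal n (gen_ideal n G)"
  unfolding monomial_ideal_def
proof (intro conjI ballI)
  show "gen_ideal n G \<subseteq> mons n" by (auto simp: gen_ideal_def)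
  fix u w assume u: "u \<in> gen_ideal n G" and w: "w \<in> mons n"
  then obtain g w' where g: "g \<in> G" "w' \<in> mons n" "u = g + w'" "u \<in> mons n"
    by (auto simp: gen_ideal_def)
  moreover have "u + w = g + (w' + w)" by (simp add: g(3) add.assoc)
  moreover have "w' + w \<in> mons n" "u + w \<in> mons n"
    using add_mem_mons g(2,4) w by blast+
  ultimately show "u + w \<in> gen_ideal n G" unfolding gen_ideal_def by blast
qed

lemma gen_ideal_Un_var:
  assumes M: "monomial_ideal n M" and k: "k \<in> {1..n}"
  shows "gen_ideal n (M \<union> {var k}) = M \<union> {u \<in> mons n. lookup u k \<noteq> 0}"
proof (intro set_eqI iffI)
  fix u assume "u \<in> gen_ideal n (M \<union> {var k})"
  then obtain g w where g: "g \<in> M \<union> {var k}" "w \<in> mons n" "u = g + w" "u \<in> mons n"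
    by (auto simp: gen_ideal_def)
  show "u \<in> M \<union> {u \<in> mons n. lookup u k \<noteq> 0}"
  proof (cases "g \<in> M")
    case True
    then show ?thesis using M g by (simp add: monomial_ideal_def)
  next
    case False
    then show ?thesis using g by (auto simp: var_def lookup_add)
  qed
next
  fix u assume u: "u \<in> M \<union> {u \<in> mons n. lookup u k \<noteq> 0}"
  have zero: "0 \<in> mons n" by (simp add: mons_def)
  show "u \<in> gen_ideal n (M \<union> {var k})"
  proof (cases "u \<in> M")
    case True
    then show ?thesis using M zero by (force simp: gen_ideal_def monomial_ideal_def)
  next
    case False
    with u have "u \<in> mons n" "lookup u k \<noteq> 0" by auto
    moreover have "u = var k + (u - var k)"
      using \<open>lookup u k \<noteq> 0\<close>
      by (intro poly_mapping_eqI) (auto simp: var_def lookup_add lookup_minus lookup_single when_def)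
    moreover have "u - var k \<in> mons n"
      using \<open>u \<in> mons n\<close> by (auto simp: mons_def in_keys_iff lookup_minus subset_iff)
    ultimately show ?thesis unfolding gen_ideal_def by blast
  qed
qed

lemma update_zero_mem_gen_ideal_iff:
  assumes indep: "\<forall>g\<in>G. lookup g k = 0" and x: "x \<in> mons n"
  shows "Poly_Mapping.update k 0 x \<in> gen_ideal n G \<longleftrightarrow> x \<in> gen_ideal n G"
proof
  have x_split: "x = Poly_Mapping.update k 0 x + Poly_Mapping.single k (lookup x k)"
    by (intro poly_mapping_eqI) (simp add: lookup_add lookup_update lookup_single when_def)
  have "Poly_Mapping.single k (lookup x k) \<in> mons n"
  proof -
    have "keys (Poly_Mapping.single k (lookup x k)) \<subseteq> keys x"
      by (simp add: keys_single in_keys_iff)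
    then show ?thesis using x by (simp add: mons_def)
  qed
  moreover assume "Poly_Mapping.update k 0 x \<in> gen_ideal n G"
  ultimately have "Poly_Mapping.update k 0 x + Poly_Mapping.single k (lookup x k) \<in> gen_ideal n G"
    using monomial_ideal_gen_ideal[of n G] unfolding monomial_ideal_def by blast
  then show "x \<in> gen_ideal n G" by (simp only: x_split[symmetric])
next
  assume "x \<in> gen_ideal n G"
  then obtain g w where g: "g \<in> G" "w \<in> mons n" "x = g + w"
    by (auto simp: gen_ideal_def)
  have "Poly_Mapping.update k 0 x = g + Poly_Mapping.update k 0 w"
    using indep g(1,3) by (intro poly_mapping_eqI) (auto simp: lookup_add lookup_update)
  moreover have "Poly_Mapping.update k 0 w \<in> mons n" "Poly_Mapping.update k 0 x \<in> mons n"
    using g x by (auto simp: mons_def in_keys_iff lookup_update subset_iff)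
  ultimately show "Poly_Mapping.update k 0 x \<in> gen_ideal n G"
    using g(1) by (auto simp: gen_ideal_def)
qed

theorem lemma1p2:
  fixes K :: "'k::field itself" and n m k :: nat and J :: "mon set"
  assumes "m < n" and "monomial_ideal m J" and "m < k" and "k \<le> n"
  shows "sdepth K n (gen_ideal n (gen_ideal n J \<union> {var k}))
           = sdepth K n (gen_ideal n J) - 1"
proof -
  let ?M = "gen_ideal n J"
  let ?U = "mons n - ?M"
  let ?z = "Poly_Mapping.update k 0"
  have k: "k \<in> {1..n}" using assms by simp
  have J_indep: "\<forall>g\<in>J. lookup g k = 0"
    using assms(2,3) lookup_eq_zero_if_mons by (auto simp: monomial_ideal_def)
  have hyperplane: "mons n - gen_ideal n (?M \<union> {var k}) = {u \<in> ?U. lookup u k = 0}"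
    using gen_ideal_Un_var[OF monomial_ideal_gen_ideal k] by blast
  have cylinder: "?z -` {u \<in> ?U. lookup u k = 0} = ?U"
    using update_zero_mem_gen_ideal_iff[OF J_indep] update_zero_mem_mons_iff[OF k]
    by (auto simp: lookup_update)
  show ?thesis
    unfolding sdepth_eq_SUP_stanley_partition hyperplane
  proof (rule enat_SUP_eq_SUP_minus_one)
    fix D assume "D \<in> {D. stanley_partition n ?U D}"
    then have part: "stanley_partition n ?U D" by simp
    show "\<exists>D'\<in>{D'. stanley_partition n {u \<in> ?U. lookup u k = 0} D'}. sdepth_dec D \<le> sdepth_dec D' + 1"
      using stanley_partition_restrict_dec[OF part] sdepth_dec_restrict_dec by blast
  next
    fix D' assume "D' \<in> {D'. stanley_partition n {u \<in> ?U. lookup u k = 0} D'}"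
    then have part: "stanley_partition n {u \<in> ?U. lookup u k = 0} D'" by simp
    have "stanley_partition n ?U (extend_dec k D')"
      using stanley_partition_extend_dec[OF part _ k] unfolding cylinder by blast
    then show "\<exists>D\<in>{D. stanley_partition n ?U D}. sdepth_dec D' + 1 \<le> sdepth_dec D"
      using sdepth_dec_extend_dec[OF part] by blast
  qed
qed

end
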